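(* Let $p:X\to Y$ be a continuous surjective map with $X$ connected and $Y$ a topological group. Suppose there is an open neighborhood $U$ of $1_Y$ such that $\mathcal U=\{U\cdot y\}_{y\in Y}$ is an overlay cover of $Y$ for $p$, and that $p$ has a regular overlay structure. Then there is a structure of a topological group on $X$ (compatible with its topology) making $p$ a continuous homomorphism.
   Context: For a continuous map $p:X\to Y$: a slice of $p$ is an open set $U\subseteq X$ such that $p^{-1}(p(U))$ is the disjoint union of a family of open sets $U_s$ ($s\in S$), each mapped by $p$ homeomorphically onto $p(U)$, with $U=U_t$ for some $t\in S$. A covering structure of $p$ is an open cover $\mathcal S$ of $X$ by slices of $p$ such that for every $U\in\mathcal S$, $p^{-1}(p(U))$ is the disjoint union of a family $\{U_j\}_{j\in J}$ of elements of $\mathcal S$, each mapped homeomorphically onto $p(U)$. For $x\in X$, $st(x,\mathcal S)=\bigcup\{U\in\mathcal S: x\in U\}$. An overlay structure of $p$ is a covering structure $\mathcal S$ such that $st(x,\mathcal S)$ is a slice of $p$ for every $x\in X$; a cover of the form $p(\mathcal S)=\{p(V):V\in\mathcal S\}$ with $\mathcal S$ an overlay structure is an overlay cover of $Y$. For a cover $\mathcal W$ of a set $Z$, a $\mathcal W$-chain is a finite sequence $\{z_0,\dots,z_n\}$ such that for each $0\le i<n$ some $W\in\mathcal W$ contains $z_i$ and $z_{i+1}$; it is a $\mathcal W$-loop if $z_0=z_n$. A lift of $\{y_0,\dots,y_n\}$ is a sequence $\{x_0,\dots,x_n\}$ with $p(x_i)=y_i$. An overlay structure $\mathcal S$ with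 overlay cover $\mathcal U$ is regular if there is no $\mathcal U$-loop having one lift that is an $\mathcal S$-chain which is a loop and another lift that is an $\mathcal S$-chain which is not a loop. (For connected $X$, if one overlay structure of $p$ is regular then all are.) *)

theory Defs
  imports "HOL-Analysis.Analysis"
begin

definition topological_group ::
  "'a topology \<Rightarrow> ('a \<Rightarrow> 'a \<Rightarrow> 'a) \<Rightarrow> ('a \<Rightarrow> 'a) \<Rightarrow> 'a \<Rightarrow> bool" where
  "topological_group T m i e \<longleftrightarrow>
     e \<in> topspace T \<and>
     (\<forall>a\<in>topspace T. \<forall>b\<in>topspace T. m a b \<in> topspace T) \<and>
     (\<forall>a\<in>topspace T. i a \<in> topspace T) \<and>
     (\<forall>a\<in>topspace T. \<forall>b\<in>topspace T. \<forall>c\<in>topspace T. m (m a b) c = m a (m b c)) \<and>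
     (\<forall>a\<in>topspace T. m e a = a \<and> m a e = a) \<and>
     (\<forall>a\<in>topspace T. m (i a) a = e \<and> m a (i a) = e) \<and>
     continuous_map (prod_topology T T) T (\<lambda>(a, b). m a b) \<and>
     continuous_map T T i"

definition sheet_decomposition ::
  "'a topology \<Rightarrow> 'b topology \<Rightarrow> ('a \<Rightarrow> 'b) \<Rightarrow> 'a set \<Rightarrow> 'a set set \<Rightarrow> bool" where
  "sheet_decomposition X Y p U F \<longleftrightarrow>
     (\<forall>V\<in>F. openin X V) \<and>
     pairwise disjnt F \<and>
     \<Union>F = {x \<in> topspace X. p x \<in> p ` U} \<and>
     (\<forall>V\<in>F. homeomorphic_map (subtopology X V) (subtopology Y (p ` U)) p)"

definition slice :: "'a topology \<Rightarrow> 'b topology \<Rightarrow> ('a \<Rightarrow> 'b) \<Rightarrow> 'a set \<Rightarrow> bool" where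
  "slice X Y p U \<longleftrightarrow> openin X U \<and> (\<exists>F. sheet_decomposition X Y p U F \<and> U \<in> F)"

definition covering_structure ::
  "'a topology \<Rightarrow> 'b topology \<Rightarrow> ('a \<Rightarrow> 'b) \<Rightarrow> 'a set set \<Rightarrow> bool" where
  "covering_structure X Y p S \<longleftrightarrow>
     (\<forall>U\<in>S. slice X Y p U) \<and> \<Union>S = topspace X \<and>
     (\<forall>U\<in>S. \<exists>J. J \<subseteq> S \<and> sheet_decomposition X Y p U J)"

definition star :: "'a \<Rightarrow> 'a set set \<Rightarrow> 'a set" where
  "star x S = \<Union>{U \<in> S. x \<in> U}"

definition overlay_structure ::
  "'a topology \<Rightarrow> 'b topology \<Rightarrow> ('a \<Rightarrow> 'b) \<Rightarrow> 'a set set \<Rightarrow> bool" where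
  "overlay_structure X Y p S \<longleftrightarrow>
     covering_structure X Y p S \<and> (\<forall>x\<in>topspace X. slice X Y p (star x S))"

definition is_chain :: "'a set set \<Rightarrow> 'a list \<Rightarrow> bool" where
  "is_chain W zs \<longleftrightarrow> zs \<noteq> [] \<and>
     (\<forall>i. Suc i < length zs \<longrightarrow> (\<exists>V\<in>W. zs ! i \<in> V \<and> zs ! Suc i \<in> V))"

definition is_loop :: "'a list \<Rightarrow> bool" where
  "is_loop zs \<longleftrightarrow> hd zs = last zs"

definition is_lift :: "('a \<Rightarrow> 'b) \<Rightarrow> 'a list \<Rightarrow> 'b list \<Rightarrow> bool" where
  "is_lift p xs ys \<longleftrightarrow> map p xs = ys"

definition regular_overlay_structure ::
  "'a topology \<Rightarrow> 'b topology \<Rightarrow> ('a \<Rightarrow> 'b) \<Rightarrow> 'a set set \<Rightarrow> bool" where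
  "regular_overlay_structure X Y p S \<longleftrightarrow>
     overlay_structure X Y p S \<and>
     \<not> (\<exists>ys xs xs'. is_chain ((`) p ` S) ys \<and> is_loop ys \<and>
          is_lift p xs ys \<and> is_chain S xs \<and> is_loop xs \<and>
          is_lift p xs' ys \<and> is_chain S xs' \<and> \<not> is_loop xs')"

definition overlay_cover ::
  "'a topology \<Rightarrow> 'b topology \<Rightarrow> ('a \<Rightarrow> 'b) \<Rightarrow> 'b set set \<Rightarrow> bool" where
  "overlay_cover X Y p \<U> \<longleftrightarrow> (\<exists>S. overlay_structure X Y p S \<and> (`) p ` S = \<U>)"

end

theory Submission
  imports Defs
begin

text \<open>
  The sets \<open>p ` V\<close>, \<open>V \<in> S\<close>, are the right translates \<open>U \<cdot> w\<close>, so a chain in \<open>Y\<close> whose consecutive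
  points share a translate lifts step by step, and uniquely, to a chain in \<open>X\<close>; lifts of two chains
  that stay in a common translate at every step end in a common member of \<open>S\<close>.  Fix \<open>eX\<close> over the
  unit.  By connectedness every \<open>a\<close> is the end of the lift from \<open>eX\<close> of some chain starting at
  the unit, and \<open>a \<cdot> b\<close> is the end of the lift from \<open>b\<close> of that chain translated on the right by
  \<open>p b\<close>.  This is independent of the chain because a translated loop lifts to a loop from every
  starting point: the set of starting points for which it does is open and closed.  The group laws
  come from concatenating and reversing chains, continuity of the product from the ladder property
  of lifts, and continuity of the inverse from that of the product, as \<open>p\<close> is a local homeomorphism.
\<close>

definition adjacent :: "'a set set \<Rightarrow> 'a \<Rightarrow> 'a \<Rightarrow> bool" where
  "adjacent W x y \<longleftrightarrow> (\<exists>V\<in>W. x \<in> V \<and> y \<in> V)"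

lemma adjacentI: "V \<in> W \<Longrightarrow> x \<in> V \<Longrightarrow> y \<in> V \<Longrightarrow> adjacent W x y"
  by (auto simp: adjacent_def)

lemma adjacent_sym: "adjacent W x y \<Longrightarrow> adjacent W y x"
  by (auto simp: adjacent_def)

lemma adjacent_image: "adjacent W x y \<Longrightarrow> adjacent ((`) f ` W) (f x) (f y)"
  by (auto simp: adjacent_def)

lemma adjacent_squares_iff:
  "adjacent ((\<lambda>P. P \<times> P) ` W) (y, y') (z, z') \<longleftrightarrow> (\<exists>P\<in>W. y \<in> P \<and> z \<in> P \<and> y' \<in> P \<and> z' \<in> P)"
  by (auto simp: adjacent_def)

lemma connected_space_locally_constant:
  assumes "connected_space X" "e \<in> topspace X" "Q e"
    and loc: "\<And>a. a \<in> topspace X \<Longrightarrow> \<exists>N. openin X N \<and> a \<in> N \<and> (\<forall>a'\<in>N. Q a' \<longleftrightarrow> Q a)"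
    and "a \<in> topspace X"
  shows "Q a"
proof -
  have open_level: "openin X {x \<in> topspace X. Q x = v}" for v
  proof (subst openin_subopen, intro ballI)
    fix x assume x: "x \<in> {x \<in> topspace X. Q x = v}"
    then have "x \<in> topspace X" by simp
    from loc[OF this] obtain N where N: "openin X N \<and> x \<in> N \<and> (\<forall>x'\<in>N. Q x' \<longleftrightarrow> Q x)" ..
    moreover have "N \<subseteq> {x \<in> topspace X. Q x = v}"
      using x N openin_subset[of X N] by blast
    ultimately show "\<exists>T. openin X T \<and> x \<in> T \<and> T \<subseteq> {x \<in> topspace X. Q x = v}"
      by blast
  qed
  have "topspace X - {x \<in> topspace X. Q x} = {x \<in> topspace X. Q x = False}"
    by auto
  then have "closedin X {x \<in> topspace X. Q x}"
    using open_level[of False] unfolding closedin_def by auto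
  moreover have "openin X {x \<in> topspace X. Q x}"
    using open_level[of True] by simp
  moreover have "{x \<in> topspace X. Q x} \<noteq> {}"
    using assms(2,3) by blast
  ultimately have "{x \<in> topspace X. Q x} = topspace X"
    using assms(1) unfolding connected_space_clopen_in by blast
  then show ?thesis using assms(5) by blast
qed

section \<open>Right translations in a topological group\<close>

locale topgroup =
  fixes Y :: "'b topology" and mY :: "'b \<Rightarrow> 'b \<Rightarrow> 'b" and iY :: "'b \<Rightarrow> 'b" and eY :: 'b
  assumes topological_group: "topological_group Y mY iY eY"
begin

lemma e_in: "eY \<in> topspace Y"
  and m_in: "a \<in> topspace Y \<Longrightarrow> b \<in> topspace Y \<Longrightarrow> mY a b \<in> topspace Y"
  and i_in: "a \<in> topspace Y \<Longrightarrow> iY a \<in> topspace Y"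
  and assoc: "a \<in> topspace Y \<Longrightarrow> b \<in> topspace Y \<Longrightarrow> c \<in> topspace Y \<Longrightarrow> mY (mY a b) c = mY a (mY b c)"
  and lid: "a \<in> topspace Y \<Longrightarrow> mY eY a = a"
  and rid: "a \<in> topspace Y \<Longrightarrow> mY a eY = a"
  and linv: "a \<in> topspace Y \<Longrightarrow> mY (iY a) a = eY"
  and rinv: "a \<in> topspace Y \<Longrightarrow> mY a (iY a) = eY"
  and continuous_map_mult: "continuous_map (prod_topology Y Y) Y (\<lambda>(a, b). mY a b)"
  and continuous_map_inv: "continuous_map Y Y iY"
  using topological_group unfolding topological_group_def by blast+

lemma continuous_map_mult':
  "continuous_map T Y f \<Longrightarrow> continuous_map T Y g \<Longrightarrow> continuous_map T Y (\<lambda>t. mY (f t) (g t))"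
  using continuous_map_compose[OF continuous_map_pairedI continuous_map_mult] by (simp add: o_def)

lemma continuous_map_inv': "continuous_map T Y f \<Longrightarrow> continuous_map T Y (\<lambda>t. iY (f t))"
  using continuous_map_compose[OF _ continuous_map_inv] by (simp add: o_def)

lemma mult_inv_cancel_right: "a \<in> topspace Y \<Longrightarrow> b \<in> topspace Y \<Longrightarrow> mY (mY a (iY b)) b = a"
  by (simp add: assoc i_in linv rid)

lemma mult_cancel_left_inv: "a \<in> topspace Y \<Longrightarrow> b \<in> topspace Y \<Longrightarrow> mY a (mY (iY a) b) = b"
  by (simp add: assoc[symmetric] i_in rinv lid)

lemma map_right_unit: "set ys \<subseteq> topspace Y \<Longrightarrow> map (\<lambda>y. mY y eY) ys = ys"
  by (rule map_idI) (auto simp: rid)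

lemma mem_right_translate_iff:
  assumes "A \<subseteq> topspace Y" "g \<in> topspace Y"
  shows "z \<in> (\<lambda>u. mY u g) ` A \<longleftrightarrow> z \<in> topspace Y \<and> mY z (iY g) \<in> A"
proof
  assume "z \<in> (\<lambda>u. mY u g) ` A"
  then obtain u where "u \<in> A" "z = mY u g" by blast
  with assms show "z \<in> topspace Y \<and> mY z (iY g) \<in> A"
    by (simp add: subset_iff m_in assoc i_in rinv rid)
next
  assume z: "z \<in> topspace Y \<and> mY z (iY g) \<in> A"
  then have "z = mY (mY z (iY g)) g"
    using assms(2) by (simp add: mult_inv_cancel_right)
  with z show "z \<in> (\<lambda>u. mY u g) ` A" by blast
qed

lemma openin_right_translate:
  assumes "openin Y A" "g \<in> topspace Y"
  shows "openin Y ((\<lambda>u. mY u g) ` A)"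
proof -
  have "continuous_map Y Y (\<lambda>z. mY z (iY g))"
    using assms(2) by (simp add: continuous_map_mult' i_in)
  then have "openin Y {z \<in> topspace Y. mY z (iY g) \<in> A}"
    using assms(1) by (rule openin_continuous_map_preimage)
  moreover have "(\<lambda>u. mY u g) ` A = {z \<in> topspace Y. mY z (iY g) \<in> A}"
    using mem_right_translate_iff[OF openin_subset[OF assms(1)] assms(2)] by blast
  ultimately show ?thesis by simp
qed

lemma right_translate_translate:
  "A \<subseteq> topspace Y \<Longrightarrow> g \<in> topspace Y \<Longrightarrow> h \<in> topspace Y \<Longrightarrow>
    (\<lambda>y. mY y h) ` (\<lambda>u. mY u g) ` A = (\<lambda>u. mY u (mY g h)) ` A"
  unfolding image_image by (intro image_cong refl) (simp add: assoc subset_iff)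

lemma openin_left_translate_preimage:
  assumes "openin Y A" "y \<in> topspace Y"
  shows "openin Y {k \<in> topspace Y. mY y k \<in> A}"
proof -
  have "continuous_map Y Y (\<lambda>k. mY y k)"
    using assms(2) by (simp add: continuous_map_mult')
  then show ?thesis
    using assms(1) by (rule openin_continuous_map_preimage)
qed

end

section \<open>Overlay structures whose sheets cover right translates\<close>

locale translation_overlay = topgroup Y mY iY eY
  for Y :: "'b topology" and mY iY eY +
  fixes X :: "'a topology" and p :: "'a \<Rightarrow> 'b" and U :: "'b set" and S :: "'a set set"
  assumes continuous_p: "continuous_map X Y p"
    and surj_p: "p ` topspace X = topspace Y"
    and connected_X: "connected_space X"
    and open_U: "openin Y U" and e_in_U: "eY \<in> U"
    and overlay_S: "overlay_structure X Y p S"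
    and images_S: "(`) p ` S = (\<lambda>w. (\<lambda>u. mY u w) ` U) ` topspace Y"
begin

abbreviation cover :: "'b set set" where
  "cover \<equiv> (`) p ` S"

lemma covering_S: "covering_structure X Y p S"
  using overlay_S by (simp add: overlay_structure_def)

lemma openin_S: "V \<in> S \<Longrightarrow> openin X V"
  using covering_S unfolding covering_structure_def slice_def by blast

lemma S_subset: "V \<in> S \<Longrightarrow> V \<subseteq> topspace X"
  using openin_S openin_subset by blast

lemma p_in: "x \<in> topspace X \<Longrightarrow> p x \<in> topspace Y"
  using surj_p by blast

lemma adjacent_refl: "x \<in> topspace X \<Longrightarrow> adjacent S x x"
  using covering_S by (auto simp: covering_structure_def adjacent_def)

lemma adjacent_in_topspace: "adjacent S x y \<Longrightarrow> x \<in> topspace X \<and> y \<in> topspace X"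
  using S_subset by (auto simp: adjacent_def)

lemma adjacent_unique:
  assumes "adjacent S x y" "adjacent S x z" "p y = p z"
  shows "y = z"
proof -
  have x: "x \<in> topspace X"
    using assms(1) adjacent_in_topspace by blast
  have star_sub: "star x S \<subseteq> topspace X"
    using S_subset by (auto simp: star_def)
  have "slice X Y p (star x S)"
    using overlay_S x by (simp add: overlay_structure_def)
  then have "homeomorphic_map (subtopology X (star x S)) (subtopology Y (p ` star x S)) p"
    by (auto simp: slice_def sheet_decomposition_def)
  then have "inj_on p (star x S)"
    using homeomorphic_imp_injective_map star_sub by (metis inf.absorb_iff2 topspace_subtopology)
  moreover have "y \<in> star x S" "z \<in> star x S"
    using assms(1,2) by (auto simp: adjacent_def star_def)
  ultimately show ?thesis
    using assms(3) by (auto dest: inj_onD)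
qed

lemma adjacent_iff_star: "adjacent S x y \<longleftrightarrow> y \<in> star x S"
  by (auto simp: adjacent_def star_def)

lemma openin_star: "openin X (star x S)"
  unfolding star_def using openin_S by blast

lemma cover_iff: "P \<in> cover \<longleftrightarrow> (\<exists>w\<in>topspace Y. P = (\<lambda>u. mY u w) ` U)"
  unfolding images_S by blast

lemma coverE:
  assumes "P \<in> cover"
  obtains w where "w \<in> topspace Y" "P = (\<lambda>u. mY u w) ` U"
proof -
  have "\<exists>w\<in>topspace Y. P = (\<lambda>u. mY u w) ` U"
    using assms unfolding cover_iff .
  then show ?thesis using that by (elim bexE)
qed

lemma openin_cover: "P \<in> cover \<Longrightarrow> openin Y P"
  using openin_right_translate[OF open_U] by (auto simp: cover_iff)

lemma right_translate_U_in_cover: "g \<in> topspace Y \<Longrightarrow> (\<lambda>u. mY u g) ` U \<in> cover"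
  by (auto simp: cover_iff)

lemma in_right_translate_U: "g \<in> topspace Y \<Longrightarrow> g \<in> (\<lambda>u. mY u g) ` U"
proof -
  assume "g \<in> topspace Y"
  then have "g = mY eY g" by (simp only: lid)
  then show ?thesis using e_in_U by (rule image_eqI)
qed

lemma cover_right_translate:
  assumes "P \<in> cover" "g \<in> topspace Y"
  shows "(\<lambda>y. mY y g) ` P \<in> cover"
proof -
  obtain w where w: "w \<in> topspace Y" "P = (\<lambda>u. mY u w) ` U"
    using assms(1) by (rule coverE)
  then have "(\<lambda>y. mY y g) ` P = (\<lambda>u. mY u (mY w g)) ` U"
    using right_translate_translate[OF openin_subset[OF open_U] w(1) assms(2)] by (simp only:)
  then show ?thesis
    using right_translate_U_in_cover[OF m_in[OF w(1) assms(2)]] by (simp only:)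
qed

lemma adjacent_cover_in_topspace:
  assumes "adjacent cover y z"
  shows "y \<in> topspace Y" "z \<in> topspace Y"
proof -
  obtain P where "P \<in> cover" "y \<in> P" "z \<in> P"
    using assms unfolding adjacent_def by (elim bexE conjE)
  then show "y \<in> topspace Y" "z \<in> topspace Y"
    using openin_subset[OF openin_cover] by auto
qed

lemma sheet_through:
  assumes "P \<in> cover" "x \<in> topspace X" "p x \<in> P"
  shows "\<exists>A\<in>S. x \<in> A \<and> p ` A = P"
proof -
  obtain V where V: "V \<in> S" "P = p ` V"
    using assms(1) by blast
  obtain J where J: "J \<subseteq> S" "sheet_decomposition X Y p V J"
    using covering_S V(1) by (auto simp: covering_structure_def)
  moreover have "x \<in> \<Union>J"
    using J(2) assms(2,3) V(2) by (auto simp: sheet_decomposition_def)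
  ultimately obtain A where A: "A \<in> J" "x \<in> A"
    by blast
  have "homeomorphic_map (subtopology X A) (subtopology Y (p ` V)) p"
    using J(2) A(1) by (auto simp: sheet_decomposition_def)
  then have "p ` (topspace X \<inter> A) = topspace Y \<inter> p ` V"
    using homeomorphic_imp_surjective_map by fastforce
  moreover have "topspace X \<inter> A = A"
    using S_subset A(1) J(1) by blast
  moreover have "topspace Y \<inter> p ` V = p ` V"
    using S_subset[OF V(1)] p_in by blast
  ultimately show ?thesis
    using A J(1) V(2) by auto
qed

lemma open_map_p: "open_map X Y p"
  unfolding open_map_def
proof (intro allI impI)
  fix G assume G: "openin X G"
  have "openin Y (p ` (G \<inter> V))" if V: "V \<in> S" for V
  proof -
    have "homeomorphic_map (subtopology X V) (subtopology Y (p ` V)) p"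
      using covering_S V by (auto simp: covering_structure_def slice_def sheet_decomposition_def)
    moreover have "openin (subtopology X V) (G \<inter> V)"
      using G by (rule openin_subtopology_Int)
    ultimately have "openin (subtopology Y (p ` V)) (p ` (G \<inter> V))"
      using homeomorphic_map_openness_eq by blast
    moreover have "openin Y (p ` V)"
      using openin_cover V by blast
    ultimately show ?thesis
      by (rule openin_trans_full)
  qed
  moreover have "p ` G = (\<Union>V\<in>S. p ` (G \<inter> V))"
  proof -
    have "G \<subseteq> \<Union>S"
      using openin_subset[OF G] covering_S by (simp add: covering_structure_def)
    then show ?thesis by blast
  qed
  ultimately show "openin Y (p ` G)"
    by auto
qed

text \<open>Near each point such a map factors through the inverse of \<open>p\<close> on a star, where \<open>p\<close> is
  injective and open.\<close>
lemma continuous_map_locally_adjacent: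
  fixes T :: "'c topology" and f :: "'c \<Rightarrow> 'a"
  assumes f_in: "f ` topspace T \<subseteq> topspace X"
    and pf: "continuous_map T Y (\<lambda>t. p (f t))"
    and loc: "\<And>t. t \<in> topspace T \<Longrightarrow> \<exists>N. openin T N \<and> t \<in> N \<and> (\<forall>t'\<in>N. adjacent S (f t) (f t'))"
  shows "continuous_map T X f"
  unfolding continuous_map
proof (intro conjI allI impI)
  show "f ` topspace T \<subseteq> topspace X" by fact
  fix G assume G: "openin X G"
  show "openin T {t \<in> topspace T. f t \<in> G}"
  proof (subst openin_subopen, intro ballI)
    fix t assume t: "t \<in> {t \<in> topspace T. f t \<in> G}"
    then obtain N where N: "openin T N" "t \<in> N" "\<forall>t'\<in>N. adjacent S (f t) (f t')"
      using loc by blast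
    define Z where "Z = G \<inter> star (f t) S"
    have "f t \<in> Z"
      using t N(2,3) by (auto simp: Z_def star_def adjacent_def)
    have "openin Y (p ` Z)"
      using open_map_p G openin_star unfolding Z_def open_map_def by blast
    then have "openin T {t' \<in> topspace T. p (f t') \<in> p ` Z}"
      using openin_continuous_map_preimage[OF pf] by blast
    then have "openin T (N \<inter> {t' \<in> topspace T. p (f t') \<in> p ` Z})"
      using N(1) by blast
    moreover have "t \<in> N \<inter> {t' \<in> topspace T. p (f t') \<in> p ` Z}"
      using t N(2) \<open>f t \<in> Z\<close> by blast
    moreover have "N \<inter> {t' \<in> topspace T. p (f t') \<in> p ` Z} \<subseteq> {t \<in> topspace T. f t \<in> G}"
    proof
      fix t' assume t': "t' \<in> N \<inter> {t' \<in> topspace T. p (f t') \<in> p ` Z}"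
      then have "p (f t') \<in> p ` Z" by blast
      then obtain z where z: "z \<in> Z" "p z = p (f t')"
        by (metis imageE)
      have "adjacent S (f t) z"
        using z(1) by (auto simp: Z_def star_def adjacent_def)
      then have "z = f t'"
        using adjacent_unique N(3) t' z(2) by blast
      then show "t' \<in> {t \<in> topspace T. f t \<in> G}"
        using z(1) t' by (auto simp: Z_def)
    qed
    ultimately show "\<exists>T'. openin T T' \<and> t \<in> T' \<and> T' \<subseteq> {t \<in> topspace T. f t \<in> G}"
      by blast
  qed
qed

section \<open>Lifting chains\<close>

text \<open>Chains in \<open>Y\<close> are lists; \<open>foldl step x ys\<close> is the end of the lift from \<open>x\<close> of the chain
  \<open>p x # ys\<close>, each step taken inside the star of the current point, where \<open>p\<close> is injective.\<close>
definition step :: "'a \<Rightarrow> 'b \<Rightarrow> 'a" where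
  "step x y = (THE z. adjacent S x z \<and> p z = y)"

lemma step_eq: "adjacent S x z \<Longrightarrow> step x (p z) = z"
  unfolding step_def by (rule the_equality) (auto intro: adjacent_unique)

lemma step_in_sheet:
  assumes "A \<in> S" "x \<in> A" "y \<in> p ` A"
  shows "step x y \<in> A" "p (step x y) = y"
proof -
  obtain z where z: "z \<in> A" "y = p z"
    using assms(3) by blast
  then have "adjacent S x z"
    using assms(1,2) by (auto simp: adjacent_def)
  then show "step x y \<in> A" "p (step x y) = y"
    using z step_eq by simp_all
qed

lemma step_adjacent:
  assumes "x \<in> topspace X" "adjacent cover (p x) y"
  shows "adjacent S x (step x y)" "p (step x y) = y"
proof -
  obtain P where P: "P \<in> cover" "p x \<in> P" "y \<in> P"
    using assms(2) unfolding adjacent_def by (elim bexE conjE)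
  obtain A where A: "A \<in> S" "x \<in> A" "p ` A = P"
    using sheet_through[OF P(1) assms(1) P(2)] by (elim bexE conjE)
  then have "step x y \<in> A" "p (step x y) = y"
    using step_in_sheet P(3) by simp_all
  then show "adjacent S x (step x y)" "p (step x y) = y"
    using A by (auto simp: adjacent_def)
qed

lemma lift_endpoint:
  assumes "x \<in> topspace X" "successively (adjacent cover) (p x # ys)"
  shows "foldl step x ys \<in> topspace X \<and> p (foldl step x ys) = last (p x # ys)"
  using assms
proof (induction ys arbitrary: x)
  case Nil
  then show ?case by simp
next
  case (Cons y ys)
  have "adjacent S x (step x y)" "p (step x y) = y"
    using step_adjacent Cons.prems by simp_all
  moreover have "step x y \<in> topspace X"
    using adjacent_in_topspace calculation(1) by blast
  ultimately show ?case
    using Cons.IH[of "step x y"] Cons.prems(2) by simp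
qed

lemma lift_reverse:
  assumes "x \<in> topspace X" "successively (adjacent cover) (p x # ys)"
  shows "foldl step (foldl step x ys) (rev (p x # ys)) = x"
  using assms
proof (induction ys arbitrary: x)
  case Nil
  then show ?case by (simp add: step_eq adjacent_refl)
next
  case (Cons y ys)
  define z where "z = step x y"
  have z: "adjacent S x z" "p z = y"
    using step_adjacent Cons.prems unfolding z_def by simp_all
  have "z \<in> topspace X"
    using z(1) adjacent_in_topspace by blast
  moreover have "successively (adjacent cover) (p z # ys)"
    using Cons.prems(2) z(2) by simp
  ultimately have "foldl step (foldl step z ys) (rev (p z # ys)) = z"
    by (rule Cons.IH)
  then have "foldl step (foldl step z ys) (rev (y # ys) @ [p x]) = step z (p x)"
    using z(2) by simp
  also have "\<dots> = x"
    using z(1) by (simp add: step_eq adjacent_sym)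
  finally show ?case
    by (simp add: z_def)
qed

lemma foldl_step_start: "x \<in> topspace X \<Longrightarrow> foldl step x (p x # ys) = foldl step x ys"
  by (simp add: step_eq adjacent_refl)

lemma lift_injective:
  assumes "x \<in> topspace X" "x' \<in> topspace X" "p x = y" "p x' = y"
    and "successively (adjacent cover) (y # ys)"
    and "foldl step x (y # ys) = foldl step x' (y # ys)"
  shows "x = x'"
proof -
  have "foldl step x ys = foldl step x' ys"
    using assms(6) foldl_step_start[OF assms(1)] foldl_step_start[OF assms(2)] assms(3,4) by simp
  then show ?thesis
    using lift_reverse[of x ys] lift_reverse[of x' ys] assms(1-5) by simp
qed

lemma ladder_step:
  assumes "adjacent S x x'" "P \<in> cover" "p x \<in> P" "y \<in> P" "p x' \<in> P" "y' \<in> P"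
  shows "adjacent S (step x y) (step x' y')"
proof -
  have "x \<in> topspace X"
    using assms(1) adjacent_in_topspace by blast
  then obtain A where A: "A \<in> S" "x \<in> A" "p ` A = P"
    using sheet_through[OF assms(2) _ assms(3)] by blast
  have "x' \<in> A"
    using step_in_sheet(1)[OF A(1,2), of "p x'"] step_eq[OF assms(1)] A(3) assms(5) by simp
  then have "step x y \<in> A" "step x' y' \<in> A"
    using step_in_sheet(1) A assms(4,6) by simp_all
  then show ?thesis
    using A(1) by (auto simp: adjacent_def)
qed

text \<open>A chain of pairs for the squares \<open>P \<times> P\<close> encodes two chains whose consecutive points always
  lie in a common member of the cover.\<close>
lemma lift_ladder:
  assumes "adjacent S x x'" "length ys = length ys'"
    and "successively (adjacent ((\<lambda>P. P \<times> P) ` cover)) (zip (p x # ys) (p x' # ys'))"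
  shows "adjacent S (foldl step x ys) (foldl step x' ys')"
  using assms(2,1,3)
proof (induction ys ys' arbitrary: x x' rule: list_induct2)
  case Nil
  then show ?case by simp
next
  case (Cons y ys y' ys')
  have "adjacent ((\<lambda>P. P \<times> P) ` cover) (p x, p x') (y, y')"
    using Cons.prems(2) by simp
  then obtain P where P: "P \<in> cover" "p x \<in> P" "y \<in> P" "p x' \<in> P" "y' \<in> P"
    unfolding adjacent_squares_iff by (elim bexE conjE)
  have "adjacent S (step x y) (step x' y')"
    using ladder_step[OF Cons.prems(1) P] .
  moreover have "x \<in> topspace X" "x' \<in> topspace X"
    using Cons.prems(1) adjacent_in_topspace by blast+
  then have "p (step x y) = y" "p (step x' y') = y'"
    using step_adjacent(2) adjacentI[OF P(1-3)] adjacentI[OF P(1,4,5)] by simp_all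
  ultimately show ?case
    using Cons.IH[of "step x y" "step x' y'"] Cons.prems(2) by simp
qed

lemma chain_in_topspace: "successively (adjacent cover) (y # ys) \<Longrightarrow> set ys \<subseteq> topspace Y"
proof (induction ys arbitrary: y)
  case Nil
  then show ?case by simp
next
  case (Cons z ys)
  then have "adjacent cover y z" "successively (adjacent cover) (z # ys)"
    by simp_all
  then show ?case
    using Cons.IH adjacent_cover_in_topspace(2) by simp
qed

lemma successively_right_translate:
  assumes "successively (adjacent cover) ys" "g \<in> topspace Y"
  shows "successively (adjacent cover) (map (\<lambda>y. mY y g) ys)"
  unfolding successively_map
proof (rule successively_mono[OF assms(1)])
  fix y z assume "adjacent cover y z"
  then obtain P where P: "P \<in> cover" "y \<in> P" "z \<in> P"
    unfolding adjacent_def by (elim bexE conjE)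
  show "adjacent cover (mY y g) (mY z g)"
    by (rule adjacentI[OF cover_right_translate[OF P(1) assms(2)]]) (use P in simp_all)
qed

lemma parallel_right_translates:
  assumes "successively (adjacent cover) ys"
  shows "\<exists>W. openin Y W \<and> eY \<in> W \<and>
    (\<forall>k\<in>W. successively (adjacent ((\<lambda>P. P \<times> P) ` cover)) (zip ys (map (\<lambda>y. mY y k) ys)))"
  using assms
proof (induction ys rule: induct_list012)
  case 1
  show ?case by (intro exI[of _ "topspace Y"]) (simp add: e_in)
next
  case (2 y)
  show ?case by (intro exI[of _ "topspace Y"]) (simp add: e_in)
next
  case (3 y z ys)
  have "adjacent cover y z" and path: "successively (adjacent cover) (z # ys)"
    using "3.prems" by simp_all
  then obtain P where P: "P \<in> cover" "y \<in> P" "z \<in> P"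
    unfolding adjacent_def by (elim bexE conjE)
  from "3.IH"(2)[OF path] obtain W where W: "openin Y W" "eY \<in> W"
    "\<forall>k\<in>W. successively (adjacent ((\<lambda>P. P \<times> P) ` cover)) (zip (z # ys) (map (\<lambda>y. mY y k) (z # ys)))"
    by (elim exE conjE)
  have yz: "y \<in> topspace Y" "z \<in> topspace Y"
    using openin_subset[OF openin_cover[OF P(1)]] P by auto
  define N where "N = W \<inter> {k \<in> topspace Y. mY y k \<in> P} \<inter> {k \<in> topspace Y. mY z k \<in> P}"
  have "openin Y N"
    unfolding N_def
    by (intro openin_Int W(1) openin_left_translate_preimage[OF openin_cover[OF P(1)]] yz)
  moreover have "eY \<in> N"
    unfolding N_def using W(2) P(2,3) e_in rid[OF yz(1)] rid[OF yz(2)] by simp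
  moreover have "successively (adjacent ((\<lambda>P. P \<times> P) ` cover))
      (zip (y # z # ys) (map (\<lambda>y. mY y k) (y # z # ys)))" if k: "k \<in> N" for k
  proof -
    have "mY y k \<in> P" "mY z k \<in> P"
      using k unfolding N_def by simp_all
    moreover have "P \<times> P \<in> (\<lambda>P. P \<times> P) ` cover"
      using P(1) by (rule imageI)
    ultimately have "adjacent ((\<lambda>P. P \<times> P) ` cover) (y, mY y k) (z, mY z k)"
      using P(2,3) by (intro adjacentI[of "P \<times> P"]) simp_all
    then show ?thesis
      using W(3) k N_def by simp
  qed
  ultimately show ?case by (intro exI[of _ N]) blast
qed

text \<open>The end of the lift from \<open>b\<close> of the chain \<open>eY # ys\<close> translated on the right by \<open>p b\<close>.\<close>
definition transport :: "'b list \<Rightarrow> 'a \<Rightarrow> 'a" where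
  "transport ys b = foldl step b (map (\<lambda>y. mY y (p b)) ys)"

lemma translated_chain:
  assumes "successively (adjacent cover) (eY # ys)" "b \<in> topspace X"
  shows "successively (adjacent cover) (p b # map (\<lambda>y. mY y (p b)) ys)"
  using successively_right_translate[OF assms(1) p_in[OF assms(2)]] lid p_in[OF assms(2)] by simp

lemma transport_endpoint:
  assumes "successively (adjacent cover) (eY # ys)" "b \<in> topspace X"
  shows "transport ys b \<in> topspace X" "p (transport ys b) = mY (last (eY # ys)) (p b)"
proof -
  have "last (p b # map (\<lambda>y. mY y (p b)) ys) = mY (last (eY # ys)) (p b)"
    using assms(2) by (cases ys rule: rev_cases) (simp_all add: lid p_in)
  then show "transport ys b \<in> topspace X" "p (transport ys b) = mY (last (eY # ys)) (p b)"
    using lift_endpoint[OF assms(2) translated_chain[OF assms]] unfolding transport_def by simp_all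
qed

lemma transport_near:
  assumes path: "successively (adjacent cover) (eY # ys)" and b: "b \<in> topspace X"
  shows "\<exists>N. openin X N \<and> b \<in> N \<and> (\<forall>b'\<in>N. adjacent S (transport ys b) (transport ys b'))"
proof -
  define g where "g = p b"
  have g: "g \<in> topspace Y"
    unfolding g_def using p_in b by simp
  define Z where "Z = map (\<lambda>y. mY y g) (eY # ys)"
  have "successively (adjacent cover) Z"
    unfolding Z_def using successively_right_translate[OF path g] .
  from parallel_right_translates[OF this] obtain W where W: "openin Y W" "eY \<in> W"
    "\<forall>k\<in>W. successively (adjacent ((\<lambda>P. P \<times> P) ` cover)) (zip Z (map (\<lambda>z. mY z k) Z))"
    by (elim exE conjE)
  define N where "N = star b S \<inter> {b' \<in> topspace X. mY (iY g) (p b') \<in> W}"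
  have "continuous_map X Y (\<lambda>b'. mY (iY g) (p b'))"
    using g by (simp add: continuous_map_mult' continuous_p i_in)
  then have "openin X N"
    unfolding N_def using openin_star openin_continuous_map_preimage[OF _ W(1)] by blast
  moreover have "b \<in> N"
    unfolding N_def using b W(2) adjacent_refl[OF b] g by (simp add: adjacent_iff_star linv g_def)
  moreover have "adjacent S (transport ys b) (transport ys b')" if b': "b' \<in> N" for b'
  proof -
    define k where "k = mY (iY g) (p b')"
    have b'X: "b' \<in> topspace X" and "adjacent S b b'" and "k \<in> W"
      using b' unfolding N_def k_def by (auto simp: adjacent_iff_star)
    have ys_in: "set (eY # ys) \<subseteq> topspace Y"
      using chain_in_topspace[OF path] e_in by simp
    have "map (\<lambda>z. mY z k) Z = map (\<lambda>y. mY y (p b')) (eY # ys)"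
      unfolding Z_def map_map o_def
    proof (rule map_cong[OF refl])
      fix y assume "y \<in> set (eY # ys)"
      then have y: "y \<in> topspace Y"
        using ys_in by blast
      have "mY (mY y g) k = mY y (mY g (mY (iY g) (p b')))"
        unfolding k_def using y g p_in[OF b'X] by (simp add: assoc i_in m_in)
      then show "mY (mY y g) k = mY y (p b')"
        using g p_in[OF b'X] by (simp add: mult_cancel_left_inv)
    qed
    also have "\<dots> = p b' # map (\<lambda>y. mY y (p b')) ys"
      using lid p_in[OF b'X] by simp
    moreover have "Z = p b # map (\<lambda>y. mY y (p b)) ys"
      unfolding Z_def g_def using lid p_in[OF b] by simp
    moreover have "successively (adjacent ((\<lambda>P. P \<times> P) ` cover)) (zip Z (map (\<lambda>z. mY z k) Z))"
      using W(3) \<open>k \<in> W\<close> by (rule bspec)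
    ultimately have "successively (adjacent ((\<lambda>P. P \<times> P) ` cover))
        (zip (p b # map (\<lambda>y. mY y (p b)) ys) (p b' # map (\<lambda>y. mY y (p b')) ys))"
      by (simp only:)
    then show ?thesis
      unfolding transport_def using lift_ladder[OF \<open>adjacent S b b'\<close>] by simp
  qed
  ultimately show ?thesis by blast
qed

section \<open>The group structure on the total space\<close>

definition eX :: 'a where
  "eX = (SOME x. x \<in> topspace X \<and> p x = eY)"

lemma eX: "eX \<in> topspace X" "p eX = eY"
proof -
  have "\<exists>x. x \<in> topspace X \<and> p x = eY"
    using surj_p e_in by (metis imageE)
  then have "eX \<in> topspace X \<and> p eX = eY"
    unfolding eX_def by (rule someI_ex)
  then show "eX \<in> topspace X" "p eX = eY" by simp_all
qed

definition reaches :: "'b list \<Rightarrow> 'a \<Rightarrow> bool" where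
  "reaches ys a \<longleftrightarrow> successively (adjacent cover) (eY # ys) \<and> foldl step eX ys = a"

lemma reaches_endpoint: "reaches ys a \<Longrightarrow> a \<in> topspace X \<and> p a = last (eY # ys)"
  unfolding reaches_def using lift_endpoint[OF eX(1), of ys] eX(2) by auto

lemma reaches_snoc:
  assumes "reaches ys a" "adjacent S a a'"
  shows "reaches (ys @ [p a']) a'"
proof -
  have "p a = last (eY # ys)"
    using reaches_endpoint[OF assms(1)] by simp
  moreover have "adjacent cover (p a) (p a')"
    using adjacent_image[OF assms(2)] .
  ultimately have "successively (adjacent cover) ((eY # ys) @ [p a'])"
    using assms(1) unfolding reaches_def successively_append_iff by simp
  moreover have "foldl step eX (ys @ [p a']) = a'"
    using assms step_eq unfolding reaches_def by simp
  ultimately show ?thesis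
    unfolding reaches_def by simp
qed

lemma reaches_reverse:
  assumes "reaches ys a"
  obtains R where "rev (eY # ys) = p a # R" "successively (adjacent cover) (p a # R)"
proof -
  have "p a = last (eY # ys)"
    using reaches_endpoint[OF assms] by simp
  then have "rev (eY # ys) = p a # tl (rev (eY # ys))"
    by (cases ys rule: rev_cases) simp_all
  moreover have "successively (adjacent cover) (eY # ys)"
    using assms unfolding reaches_def by simp
  then have "successively (adjacent cover) (rev (eY # ys))"
    unfolding successively_rev by (rule successively_mono) (simp add: adjacent_sym)
  ultimately show ?thesis
    using that by simp
qed

lemma reaches_exists: "a \<in> topspace X \<Longrightarrow> \<exists>ys. reaches ys a"
proof (rule connected_space_locally_constant[OF connected_X eX(1)])
  have "reaches [] eX"
    by (simp add: reaches_def)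
  then show "\<exists>ys. reaches ys eX" ..
next
  fix a assume "a \<in> topspace X"
  have "(\<exists>ys. reaches ys a') \<longleftrightarrow> (\<exists>ys. reaches ys a)" if "a' \<in> star a S" for a'
    using that reaches_snoc adjacent_sym unfolding adjacent_iff_star[symmetric] by metis
  then show "\<exists>N. openin X N \<and> a \<in> N \<and> (\<forall>a'\<in>N. (\<exists>ys. reaches ys a') \<longleftrightarrow> (\<exists>ys. reaches ys a))"
    using openin_star adjacent_refl[OF \<open>a \<in> topspace X\<close>] unfolding adjacent_iff_star by blast
qed

text \<open>The starting points from which the translated loop lifts to a loop form an open and closed
  set: this is where connectedness replaces the regularity of the overlay structure.\<close>
lemma transport_loop:
  assumes l: "reaches l eX" and b: "b \<in> topspace X"
  shows "transport l b = b"
proof (rule connected_space_locally_constant[OF connected_X eX(1) _ _ b])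
  have path: "successively (adjacent cover) (eY # l)"
    using l unfolding reaches_def by simp
  have "map (\<lambda>y. mY y eY) l = l"
    using chain_in_topspace[OF path] by (rule map_right_unit)
  then show "transport l eX = eX"
    using l eX(2) unfolding transport_def reaches_def by simp
  fix b assume b: "b \<in> topspace X"
  obtain N where N: "openin X N" "b \<in> N" "\<forall>b'\<in>N. adjacent S (transport l b) (transport l b')"
    using transport_near[OF path b] by (elim exE conjE)
  have last_eY: "last (eY # l) = eY"
    using reaches_endpoint[OF l] eX(2) by simp
  have "transport l b' = b' \<longleftrightarrow> transport l b = b" if b': "b' \<in> N \<inter> star b S" for b'
  proof -
    have bb': "adjacent S b b'" and qq': "adjacent S (transport l b) (transport l b')"
      using b' N(3) by (auto simp: adjacent_iff_star)
    then have "b' \<in> topspace X"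
      using adjacent_in_topspace by blast
    then have pq: "p (transport l b) = p b" and pq': "p (transport l b') = p b'"
      using transport_endpoint(2)[OF path] b last_eY lid p_in by simp_all
    show ?thesis
    proof
      assume "transport l b' = b'"
      then show "transport l b = b"
        using adjacent_unique[OF _ adjacent_sym[OF bb'] pq] qq' by (simp add: adjacent_sym)
    next
      assume "transport l b = b"
      then show "transport l b' = b'"
        using adjacent_unique[OF _ bb' pq'] qq' by simp
    qed
  qed
  moreover have "openin X (N \<inter> star b S)"
    using N(1) openin_star by blast
  moreover have "b \<in> N \<inter> star b S"
    using N(2) adjacent_refl[OF b] by (simp add: adjacent_iff_star)
  ultimately show "\<exists>N. openin X N \<and> b \<in> N \<and> (\<forall>b'\<in>N. transport l b' = b' \<longleftrightarrow> transport l b = b)"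
    by blast
qed

lemma transport_well_defined:
  assumes ys: "reaches ys a" and zs: "reaches zs a" and b: "b \<in> topspace X"
  shows "transport ys b = transport zs b"
proof -
  define f where "f = (\<lambda>y. mY y (p b))"
  have a: "a \<in> topspace X" "p a = last (eY # ys)" "p a = last (eY # zs)"
    using reaches_endpoint[OF ys] reaches_endpoint[OF zs] by simp_all
  have ys_path: "successively (adjacent cover) (eY # ys)"
    and zs_path: "successively (adjacent cover) (eY # zs)"
    using ys zs unfolding reaches_def by simp_all
  obtain R where R: "rev (eY # zs) = p a # R" "successively (adjacent cover) (p a # R)"
    using reaches_reverse[OF zs] .
  have "reaches (ys @ p a # R) eX"
    unfolding reaches_def
  proof
    have "adjacent cover (p a) (p a)"
      using adjacent_image[OF adjacent_refl[OF a(1)]] .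
    then have "successively (adjacent cover) ((eY # ys) @ (p a # R))"
      using ys_path R(2) a(2) unfolding successively_append_iff by simp
    then show "successively (adjacent cover) (eY # ys @ p a # R)"
      by simp
    have "foldl step eX (ys @ p a # R) = foldl step (foldl step eX zs) (rev (p eX # zs))"
      using ys zs R(1) eX(2) unfolding reaches_def by simp
    also have "\<dots> = eX"
      using lift_reverse[OF eX(1)] zs_path eX(2) by simp
    finally show "foldl step eX (ys @ p a # R) = eX" .
  qed
  then have "transport (ys @ p a # R) b = b"
    using b by (rule transport_loop)
  then have "foldl step (transport ys b) (map f (p a # R)) = b"
    unfolding transport_def f_def by simp
  moreover have "foldl step (transport zs b) (map f (p a # R)) = b"
  proof -
    have "p b # map f zs = map f (eY # zs)"
      using lid p_in[OF b] unfolding f_def by simp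
    then have "rev (p b # map f zs) = map f (p a # R)"
      by (simp only: rev_map R(1))
    then show ?thesis
      using lift_reverse[OF b translated_chain[OF zs_path b]] unfolding transport_def f_def by simp
  qed
  moreover have "p (transport ys b) = f (p a)" "p (transport zs b) = f (p a)"
    using transport_endpoint(2) ys_path zs_path b a unfolding f_def by simp_all
  moreover have "successively (adjacent cover) (map f (p a # R))"
    unfolding f_def using successively_right_translate[OF R(2) p_in[OF b]] .
  ultimately show ?thesis
    using lift_injective[of "transport ys b" "transport zs b" "f (p a)" "map f R"]
      transport_endpoint(1) ys_path zs_path b by simp
qed

definition mX :: "'a \<Rightarrow> 'a \<Rightarrow> 'a" where
  "mX a b = transport (SOME ys. reaches ys a) b"

lemma mX_eq: "reaches ys a \<Longrightarrow> b \<in> topspace X \<Longrightarrow> mX a b = transport ys b"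
  unfolding mX_def by (metis someI transport_well_defined)

lemma mX_closed:
  assumes "a \<in> topspace X" "b \<in> topspace X"
  shows "mX a b \<in> topspace X" "p (mX a b) = mY (p a) (p b)"
proof -
  obtain ys where ys: "reaches ys a"
    using reaches_exists[OF assms(1)] ..
  have "successively (adjacent cover) (eY # ys)"
    using ys unfolding reaches_def by simp
  moreover have "p a = last (eY # ys)"
    using reaches_endpoint[OF ys] by simp
  ultimately show "mX a b \<in> topspace X" "p (mX a b) = mY (p a) (p b)"
    using mX_eq[OF ys assms(2)] transport_endpoint assms(2) by simp_all
qed

lemma mX_assoc:
  assumes a: "a \<in> topspace X" and b: "b \<in> topspace X" and d: "d \<in> topspace X"
  shows "mX (mX a b) d = mX a (mX b d)"
proof -
  obtain ys where ys: "reaches ys a"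
    using reaches_exists[OF a] ..
  obtain zs where zs: "reaches zs b"
    using reaches_exists[OF b] ..
  define f where "f = (\<lambda>y. mY y (p b))"
  have ys_path: "successively (adjacent cover) (eY # ys)"
    using ys unfolding reaches_def by simp
  have "reaches (zs @ map f ys) (mX a b)"
    unfolding reaches_def
  proof
    have "successively (adjacent cover) (p b # map f ys)"
      using translated_chain[OF ys_path b] unfolding f_def .
    moreover have "p b = last (eY # zs)"
      using reaches_endpoint[OF zs] by simp
    ultimately have "successively (adjacent cover) ((eY # zs) @ map f ys)"
      using zs unfolding reaches_def successively_append_iff by (auto simp: successively_Cons)
    then show "successively (adjacent cover) (eY # zs @ map f ys)"
      by simp
    show "foldl step eX (zs @ map f ys) = mX a b"
      using zs mX_eq[OF ys b] unfolding reaches_def transport_def f_def by simp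
  qed
  then have "mX (mX a b) d = foldl step (transport zs d) (map (\<lambda>y. mY (f y) (p d)) ys)"
    using mX_eq d unfolding transport_def by (simp add: o_def)
  also have "map (\<lambda>y. mY (f y) (p d)) ys = map (\<lambda>y. mY y (p (mX b d))) ys"
    using chain_in_topspace[OF ys_path] p_in[OF b] p_in[OF d] mX_closed(2)[OF b d]
    unfolding f_def by (auto simp: assoc)
  also have "foldl step (transport zs d) \<dots> = mX a (mX b d)"
    using mX_eq[OF zs d] mX_eq[OF ys mX_closed(1)[OF b d]] unfolding transport_def by simp
  finally show ?thesis .
qed

lemma mX_left_unit: "b \<in> topspace X \<Longrightarrow> mX eX b = b"
  using mX_eq[of "[]" eX b] by (simp add: reaches_def transport_def)

lemma mX_right_unit:
  assumes "a \<in> topspace X"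
  shows "mX a eX = a"
proof -
  obtain ys where ys: "reaches ys a"
    using reaches_exists[OF assms] ..
  then have "map (\<lambda>y. mY y eY) ys = ys"
    using chain_in_topspace[of eY ys] map_right_unit unfolding reaches_def by simp
  then show ?thesis
    using mX_eq[OF ys eX(1)] ys eX(2) unfolding transport_def reaches_def by simp
qed

text \<open>The inverse of \<open>a\<close> is the end of the lift from \<open>eX\<close> of a chain to \<open>a\<close>, reversed and translated
  on the right by \<open>iY (p a)\<close>.\<close>
lemma right_inverse_exists:
  assumes a: "a \<in> topspace X"
  shows "\<exists>x\<in>topspace X. mX a x = eX"
proof -
  obtain ys where ys: "reaches ys a"
    using reaches_exists[OF a] ..
  obtain R where R: "rev (eY # ys) = p a # R" "successively (adjacent cover) (p a # R)"
    using reaches_reverse[OF ys] .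
  define g where "g = iY (p a)"
  define f where "f = (\<lambda>y. mY y g)"
  have g: "g \<in> topspace Y"
    unfolding g_def using i_in p_in a by simp
  have fpa: "f (p a) = eY"
    unfolding f_def g_def using rinv p_in a by simp
  define x where "x = foldl step eX (map f R)"
  have path: "successively (adjacent cover) (eY # map f R)"
    using successively_right_translate[OF R(2) g] fpa unfolding f_def by simp
  then have "reaches (map f R) x"
    unfolding reaches_def x_def by simp
  then have x: "x \<in> topspace X" "p x = last (eY # map f R)"
    using reaches_endpoint by simp_all
  have "eY # map f R = map f (rev (eY # ys))"
    by (simp only: R(1) list.map fpa)
  then have "rev (eY # map f R) = map f (eY # ys)"
    by (simp only: rev_map rev_rev_ident)
  also have "\<dots> = g # map f ys"
    using lid[OF g] unfolding f_def by simp
  finally have rev_eq: "rev (eY # map f R) = g # map f ys" .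
  have "p x = hd (rev (eY # map f R))"
    using x(2) by (simp only: hd_rev)
  then have "p x = g"
    by (simp only: rev_eq list.sel(1))
  have "mX a x = foldl step x (map f ys)"
    using mX_eq[OF ys x(1)] \<open>p x = g\<close> unfolding transport_def f_def by (simp only:)
  also have "\<dots> = foldl step x (p x # map f ys)"
    by (rule foldl_step_start[OF x(1), symmetric])
  also have "\<dots> = foldl step x (rev (eY # map f R))"
    by (simp only: rev_eq \<open>p x = g\<close>)
  also have "\<dots> = eX"
    using lift_reverse[OF eX(1), of "map f R"] path unfolding x_def eX(2) by simp
  finally have "mX a x = eX" .
  with x(1) show ?thesis ..
qed

definition iX :: "'a \<Rightarrow> 'a" where
  "iX a = (SOME x. x \<in> topspace X \<and> mX a x = eX)"

lemma iX:
  assumes "a \<in> topspace X"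
  shows "iX a \<in> topspace X" "mX a (iX a) = eX"
proof -
  have "\<exists>x. x \<in> topspace X \<and> mX a x = eX"
    using right_inverse_exists[OF assms] by blast
  then have "iX a \<in> topspace X \<and> mX a (iX a) = eX"
    unfolding iX_def by (rule someI_ex)
  then show "iX a \<in> topspace X" "mX a (iX a) = eX" by simp_all
qed

lemma mX_left_inverse:
  assumes a: "a \<in> topspace X"
  shows "mX (iX a) a = eX"
proof -
  define y where "y = iX a"
  define z where "z = iX y"
  have y: "y \<in> topspace X" "mX a y = eX"
    using iX[OF a] unfolding y_def by simp_all
  have z: "z \<in> topspace X" "mX y z = eX"
    using iX[OF y(1)] unfolding z_def by simp_all
  have "mX y a = mX (mX y a) (mX y z)"
    using mX_right_unit mX_closed(1)[OF y(1) a] z(2) by simp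
  also have "\<dots> = mX y (mX (mX a y) z)"
    using mX_assoc y(1) a z(1) mX_closed(1) by simp
  also have "\<dots> = eX"
    using y(2) mX_left_unit z by simp
  finally show ?thesis
    unfolding y_def .
qed

lemma iX_unique:
  assumes "a \<in> topspace X" "x \<in> topspace X" "mX a x = eX"
  shows "x = iX a"
proof -
  have "x = mX (mX (iX a) a) x"
    using mX_left_inverse mX_left_unit assms by simp
  also have "\<dots> = iX a"
    using mX_assoc iX mX_right_unit assms by simp
  finally show ?thesis .
qed

lemma p_iX: "a \<in> topspace X \<Longrightarrow> p (iX a) = iY (p a)"
  using mX_closed(2)[of a "iX a"] iX[of a] eX(2) p_in
  by (metis i_in linv lid assoc rid)

lemma mX_step:
  assumes "adjacent S a a'" "b \<in> topspace X"
  shows "mX a' b = step (mX a b) (mY (p a') (p b))"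
proof -
  obtain ys where ys: "reaches ys a"
    using reaches_exists assms(1) adjacent_in_topspace by blast
  show ?thesis
    using mX_eq[OF reaches_snoc[OF ys assms(1)] assms(2)] mX_eq[OF ys assms(2)]
    unfolding transport_def by simp
qed

lemma continuous_map_mX: "continuous_map (prod_topology X X) X (\<lambda>(a, b). mX a b)"
proof (rule continuous_map_locally_adjacent)
  show "(\<lambda>(a, b). mX a b) ` topspace (prod_topology X X) \<subseteq> topspace X"
    using mX_closed(1) by auto
  have pf: "continuous_map (prod_topology X X) Y (\<lambda>t. p (fst t))"
    using continuous_map_compose[OF continuous_map_fst continuous_p] by (simp add: o_def)
  have ps: "continuous_map (prod_topology X X) Y (\<lambda>t. p (snd t))"
    using continuous_map_compose[OF continuous_map_snd continuous_p] by (simp add: o_def)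
  show "continuous_map (prod_topology X X) Y (\<lambda>t. p ((\<lambda>(a, b). mX a b) t))"
    using continuous_map_mult'[OF pf ps] by (rule continuous_map_eq) (auto simp: mX_closed(2))
  fix t assume "t \<in> topspace (prod_topology X X)"
  then obtain a b where t: "t = (a, b)" "a \<in> topspace X" "b \<in> topspace X"
    by auto
  obtain ys where ys: "reaches ys a"
    using reaches_exists[OF t(2)] ..
  then have path: "successively (adjacent cover) (eY # ys)"
    unfolding reaches_def by simp
  obtain Nb where Nb: "openin X Nb" "b \<in> Nb" "\<forall>b'\<in>Nb. adjacent S (transport ys b) (transport ys b')"
    using transport_near[OF path t(3)] by (elim exE conjE)
  define g where "g = mY (p a) (p b)"
  define P where "P = (\<lambda>u. mY u g) ` U"
  have g: "g \<in> topspace Y"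
    unfolding g_def using m_in p_in t by simp
  have P: "P \<in> cover" "openin Y P" "g \<in> P"
    unfolding P_def using right_translate_U_in_cover[OF g] openin_cover in_right_translate_U[OF g]
    by simp_all
  define T where "T = prod_topology X X"
  define N where "N = {t \<in> topspace T. fst t \<in> star a S} \<inter> {t \<in> topspace T. snd t \<in> Nb} \<inter>
    {t \<in> topspace T. mY (p a) (p (snd t)) \<in> P} \<inter> {t \<in> topspace T. mY (p (fst t)) (p (snd t)) \<in> P}"
  have "continuous_map (prod_topology X X) Y (\<lambda>t. mY (p a) (p (snd t)))"
    using continuous_map_mult'[OF _ ps] p_in t(2) by simp
  then have "openin T N"
    unfolding N_def T_def
    using continuous_map_mult'[OF pf ps] continuous_map_fst[of X X] continuous_map_snd[of X X]
      openin_star Nb(1) P(2)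
    by (intro openin_Int openin_continuous_map_preimage) simp_all
  moreover have "t \<in> N"
    unfolding N_def T_def using t Nb(2) P(3) adjacent_refl[OF t(2)] by (simp add: g_def adjacent_iff_star)
  moreover have "adjacent S (mX a b) (mX a' b')" if "(a', b') \<in> N" for a' b'
  proof -
    have aa': "adjacent S a a'" and b': "b' \<in> topspace X" "b' \<in> Nb"
      and in_P: "mY (p a) (p b') \<in> P" "mY (p a') (p b') \<in> P"
      using that unfolding N_def T_def by (auto simp: adjacent_iff_star)
    have "adjacent S (mX a b) (mX a b')"
      using Nb(3) b'(2) mX_eq[OF ys t(3)] mX_eq[OF ys b'(1)] by simp
    moreover have "p (mX a b) = g" "p (mX a b') = mY (p a) (p b')"
      unfolding g_def using mX_closed(2) t b' by simp_all
    ultimately have "adjacent S (step (mX a b) g) (step (mX a b') (mY (p a') (p b')))"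
      using ladder_step[of "mX a b" "mX a b'" P g] P(1,3) in_P by simp
    moreover have "step (mX a b) g = mX a b"
      using step_eq[OF adjacent_refl[OF mX_closed(1)[OF t(2,3)]]] \<open>p (mX a b) = g\<close> by simp
    ultimately show ?thesis
      using mX_step[OF aa' b'(1)] by simp
  qed
  ultimately show "\<exists>N. openin (prod_topology X X) N \<and> t \<in> N \<and>
      (\<forall>t'\<in>N. adjacent S ((\<lambda>(a, b). mX a b) t) ((\<lambda>(a, b). mX a b) t'))"
    unfolding T_def using t(1) by (intro exI[of _ N]) auto
qed

text \<open>Continuity of the inverse only uses continuity of the multiplication: near \<open>a\<close>, the point
  of the star of \<open>iX a\<close> over \<open>iY (p a')\<close> is a right inverse of \<open>a'\<close>.\<close>
lemma continuous_map_iX: "continuous_map X X iX"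
proof (rule continuous_map_locally_adjacent)
  show "iX ` topspace X \<subseteq> topspace X"
    using iX(1) by blast
  show "continuous_map X Y (\<lambda>a. p (iX a))"
    using continuous_map_inv'[OF continuous_p] by (rule continuous_map_eq) (simp add: p_iX)
  fix a assume a: "a \<in> topspace X"
  define i where "i = iX a"
  have i: "i \<in> topspace X" "mX a i = eX" "p i = iY (p a)"
    unfolding i_def using iX[OF a] p_iX[OF a] by simp_all
  have "openin (prod_topology X X) {t \<in> topspace (prod_topology X X). (\<lambda>(a, b). mX a b) t \<in> star eX S}"
    using continuous_map_mX openin_star by (rule openin_continuous_map_preimage)
  moreover have "(a, i) \<in> {t \<in> topspace (prod_topology X X). (\<lambda>(a, b). mX a b) t \<in> star eX S}"
    using a i adjacent_refl[OF eX(1)] by (simp add: adjacent_iff_star)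
  ultimately obtain N1 N2 where N12: "openin X N1" "openin X N2" "a \<in> N1" "i \<in> N2"
    "N1 \<times> N2 \<subseteq> {t \<in> topspace (prod_topology X X). (\<lambda>(a, b). mX a b) t \<in> star eX S}"
    unfolding openin_prod_topology_alt by meson
  define Z where "Z = N2 \<inter> star i S"
  have "i \<in> Z"
    unfolding Z_def using N12(4) adjacent_refl[OF i(1)] by (simp add: adjacent_iff_star)
  have "openin Y (p ` Z)"
    using open_map_p N12(2) openin_star unfolding Z_def open_map_def by blast
  then have "openin X {a' \<in> topspace X. iY (p a') \<in> p ` Z}"
    using continuous_map_inv'[OF continuous_p] by (rule openin_continuous_map_preimage[rotated])
  then have "openin X (N1 \<inter> {a' \<in> topspace X. iY (p a') \<in> p ` Z})"
    using N12(1) by blast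
  moreover have "a \<in> N1 \<inter> {a' \<in> topspace X. iY (p a') \<in> p ` Z}"
    using a N12(3) i(3) \<open>i \<in> Z\<close> by (metis (mono_tags, lifting) IntI imageI mem_Collect_eq)
  moreover have "adjacent S i (iX a')" if a': "a' \<in> N1 \<inter> {a' \<in> topspace X. iY (p a') \<in> p ` Z}" for a'
  proof -
    obtain j where j: "j \<in> Z" "p j = iY (p a')"
      using a' by (metis (mono_tags, lifting) IntD2 imageE mem_Collect_eq)
    have a'X: "a' \<in> topspace X" and jX: "j \<in> topspace X"
      using a' j(1) N12(2) openin_subset unfolding Z_def by auto
    have "mX a' j \<in> star eX S"
      using N12(5) a' j(1) unfolding Z_def by auto
    moreover have "p (mX a' j) = p eX"
      using mX_closed(2)[OF a'X jX] j(2) rinv p_in[OF a'X] eX(2) by simp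
    ultimately have "mX a' j = eX"
      using adjacent_unique adjacent_refl[OF eX(1)] by (auto simp: adjacent_iff_star)
    then have "j = iX a'"
      using iX_unique a'X jX by blast
    then show ?thesis
      using j(1) unfolding Z_def by (simp add: adjacent_iff_star)
  qed
  ultimately show "\<exists>N. openin X N \<and> a \<in> N \<and> (\<forall>a'\<in>N. adjacent S (iX a) (iX a'))"
    unfolding i_def by blast
qed

lemma topological_group_X: "topological_group X mX iX eX"
  unfolding topological_group_def
proof (intro conjI ballI)
  show "eX \<in> topspace X" by (rule eX(1))
  show "continuous_map (prod_topology X X) X (\<lambda>(a, b). mX a b)" by (rule continuous_map_mX)
  show "continuous_map X X iX" by (rule continuous_map_iX)
  fix a assume a: "a \<in> topspace X"
  show "iX a \<in> topspace X" "mX a (iX a) = eX" using iX[OF a] by simp_all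
  show "mX eX a = a" using mX_left_unit[OF a] .
  show "mX a eX = a" using mX_right_unit[OF a] .
  show "mX (iX a) a = eX" using mX_left_inverse[OF a] .
  fix b assume b: "b \<in> topspace X"
  show "mX a b \<in> topspace X" using mX_closed(1)[OF a b] .
  fix c assume c: "c \<in> topspace X"
  show "mX (mX a b) c = mX a (mX b c)" using mX_assoc[OF a b c] .
qed

end

theorem theorem6p4:
  fixes X :: "'a topology" and Y :: "'b topology" and p :: "'a \<Rightarrow> 'b"
    and mY :: "'b \<Rightarrow> 'b \<Rightarrow> 'b" and iY :: "'b \<Rightarrow> 'b" and eY :: "'b"
    and U :: "'b set"
  assumes "continuous_map X Y p"
    and "p ` topspace X = topspace Y"
    and "connected_space X"
    and "topological_group Y mY iY eY"
    and "openin Y U" and "eY \<in> U"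
    and "overlay_cover X Y p ((\<lambda>y. (\<lambda>u. mY u y) ` U) ` topspace Y)"
    and "\<exists>S. regular_overlay_structure X Y p S"
  shows "\<exists>m i e. topological_group X m i e \<and> continuous_map X Y p \<and>
           (\<forall>a\<in>topspace X. \<forall>b\<in>topspace X. p (m a b) = mY (p a) (p b))"
proof -
  obtain S where S: "overlay_structure X Y p S" "(`) p ` S = (\<lambda>y. (\<lambda>u. mY u y) ` U) ` topspace Y"
    using assms(7) unfolding overlay_cover_def by blast
  interpret translation_overlay Y mY iY eY X p U S
    by unfold_locales (fact assms S)+
  show ?thesis
    using topological_group_X mX_closed(2) assms(1) by blast
qed

end
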